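(* Let $V \ge 2$ be an integer, let $z \in \mathbb{R}^V$ be a logit vector and let $p = \mathrm{softmax}(z) \in \Delta^{V-1}$, i.e. $p_j = e^{z_j}/\sum_{k=1}^V e^{z_k}$. Define the token-wise self-certainty \[ \mathrm{SC}(p) = \mathrm{KL}(U \,\|\, p) = -\frac{1}{V}\sum_{j=1}^V \log\big(V\,p_j\big), \] where $U$ is the uniform distribution on $\{1,\dots,V\}$. Fix a target index $y^* \in \{1,\dots,V\}$ and consider the gradient-ascent direction on $\log p_{y^*}$ with respect to the logits, $\Delta z_k = \frac{\partial \log p_{y^*}}{\partial z_k} = \delta_{k,y^*} - p_k$ for $k=1,\dots,V$. For $\eta \ge 0$ set $z(\eta) = z + \eta\,\Delta z$ and $p(\eta) = \mathrm{softmax}(z(\eta))$. Then \[ \left.\frac{d}{d\eta}\mathrm{SC}\big(p(\eta)\big)\right|_{\eta=0} > 0 \quad\Longleftrightarrow\quad p_{y^*} > \|p\|_2^2 = \sum_{k=1}^V p_k^2 . \] That is, a gradient-ascent step on $\log p_{y^*}$ increases the self-certainty to first order in the step size if and only if $p_{y^*} > \|p\|_2^2$.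
   Context: $\delta_{k,y^*}$ is the Kronecker delta. $\Delta^{V-1}$ denotes the probability simplex in $\mathbb{R}^V$. *)

theory Defs
  imports "HOL-Analysis.Analysis"
begin

text \<open>Vocabulary indexed by {..<V} (0-based version of {1..V}).\<close>

definition softmax :: "nat \<Rightarrow> (nat \<Rightarrow> real) \<Rightarrow> nat \<Rightarrow> real" where
  "softmax V z j = exp (z j) / (\<Sum>k<V. exp (z k))"

definition self_certainty :: "nat \<Rightarrow> (nat \<Rightarrow> real) \<Rightarrow> real" where
  "self_certainty V p = - (1 / real V) * (\<Sum>j<V. ln (real V * p j))"

definition grad_dir :: "nat \<Rightarrow> (nat \<Rightarrow> real) \<Rightarrow> nat \<Rightarrow> nat \<Rightarrow> real" where
  "grad_dir V z y k = (if k = y then 1 else 0) - softmax V z k"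

end

theory Submission
  imports Defs
begin

text \<open>On softmax outputs the self-certainty is log-sum-exp of the logits minus their mean
  (minus \<open>ln V\<close>). Along a line \<open>z + \<eta> d\<close> the derivative of log-sum-exp at \<open>0\<close>
  is the \<open>p\<close>-average of \<open>d\<close>, while the mean term is constant for the gradient direction
  \<open>d k = \<delta>(k, y) - p k\<close>, which sums to zero. So the derivative is
  \<open>\<Sum>k. p k * (\<delta>(k, y) - p k) = p y - \<Sum>k. (p k)\<^sup>2\<close>.\<close>

lemma sum_exp_pos:
  fixes w :: "nat \<Rightarrow> real"
  assumes "V > 0"
  shows "(\<Sum>k<V. exp (w k)) > 0"
  using assms by (intro sum_pos) auto

lemma sum_softmax:
  assumes "V > 0"
  shows "(\<Sum>k<V. softmax V w k) = 1"
  using sum_exp_pos[OF assms, of w]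
  by (simp add: softmax_def sum_divide_distrib[symmetric])

lemma self_certainty_softmax:
  assumes "V > 0"
  shows "self_certainty V (softmax V w) =
           ln (\<Sum>k<V. exp (w k)) - ln (real V) - (\<Sum>j<V. w j) / real V"
proof -
  define L where "L = ln (\<Sum>k<V. exp (w k))"
  have "ln (real V * softmax V w j) = ln (real V) + w j - L" for j
    using assms sum_exp_pos[OF assms, of w]
    by (simp add: softmax_def L_def ln_mult ln_div)
  then have "self_certainty V (softmax V w) = - (1 / real V) * (\<Sum>j<V. ln (real V) + w j - L)"
    by (simp add: self_certainty_def)
  also have "\<dots> = L - ln (real V) - (\<Sum>j<V. w j) / real V"
    using assms by (simp add: sum.distrib sum_subtractf field_simps)
  finally show ?thesis
    by (simp add: L_def)
qed

lemma has_real_derivative_ln_sum_exp_line: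
  fixes z d :: "nat \<Rightarrow> real"
  assumes "V > 0"
  shows "((\<lambda>\<eta>. ln (\<Sum>k<V. exp (z k + \<eta> * d k))) has_real_derivative
            (\<Sum>k<V. softmax V (\<lambda>k. z k + t * d k) k * d k)) (at t)"
proof -
  define S where "S = (\<Sum>k<V. exp (z k + t * d k))"
  have "((\<lambda>\<eta>. ln (\<Sum>k<V. exp (z k + \<eta> * d k))) has_real_derivative
          (\<Sum>k<V. exp (z k + t * d k) * d k) / S) (at t)"
    unfolding S_def by (rule derivative_eq_intros refl | simp add: sum_exp_pos[OF assms])+
  moreover have "(\<Sum>k<V. exp (z k + t * d k) * d k) / S =
                   (\<Sum>k<V. softmax V (\<lambda>k. z k + t * d k) k * d k)"
    by (simp add: softmax_def S_def sum_divide_distrib)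
  ultimately show ?thesis
    by simp
qed

lemma has_real_derivative_self_certainty_line:
  fixes z d :: "nat \<Rightarrow> real"
  assumes "V > 0"
  shows "((\<lambda>\<eta>. self_certainty V (softmax V (\<lambda>k. z k + \<eta> * d k))) has_real_derivative
            (\<Sum>k<V. softmax V z k * d k) - (\<Sum>k<V. d k) / real V) (at 0)"
proof -
  have mean: "((\<lambda>\<eta>. (\<Sum>k<V. z k + \<eta> * d k) / real V) has_real_derivative
                 (\<Sum>k<V. d k) / real V) (at 0)"
    using assms by (auto intro!: derivative_eq_intros)
  have "((\<lambda>\<eta>. ln (\<Sum>k<V. exp (z k + \<eta> * d k)) - ln (real V)
                 - (\<Sum>k<V. z k + \<eta> * d k) / real V) has_real_derivative
          (\<Sum>k<V. softmax V z k * d k) - 0 - (\<Sum>k<V. d k) / real V) (at 0)"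
    using has_real_derivative_ln_sum_exp_line[OF assms, of z d 0]
    by (intro DERIV_diff DERIV_const mean) simp
  then show ?thesis
    by (simp add: self_certainty_softmax[OF assms])
qed

lemma sum_grad_dir:
  assumes "y < V"
  shows "(\<Sum>k<V. grad_dir V z y k) = 0"
  using assms sum_softmax[of V z] by (simp add: grad_dir_def sum_subtractf)

lemma sum_softmax_times_grad_dir:
  assumes "y < V"
  shows "(\<Sum>k<V. softmax V z k * grad_dir V z y k) = softmax V z y - (\<Sum>k<V. (softmax V z k)\<^sup>2)"
proof -
  have "(\<Sum>k<V. softmax V z k * grad_dir V z y k) =
          (\<Sum>k<V. (if k = y then softmax V z k else 0) - (softmax V z k)\<^sup>2)"
    by (intro sum.cong) (auto simp: grad_dir_def power2_eq_square algebra_simps)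
  then show ?thesis
    using assms by (simp add: sum_subtractf)
qed

theorem theorem1:
  fixes V :: nat and z :: "nat \<Rightarrow> real" and y :: nat
  assumes "V \<ge> 2" and "y < V"
  defines "p \<equiv> softmax V z"
  defines "SCpath \<equiv> (\<lambda>\<eta>::real. self_certainty V
             (softmax V (\<lambda>k. z k + \<eta> * grad_dir V z y k)))"
  shows "\<exists>D. (SCpath has_real_derivative D) (at 0 within {0..}) \<and>
             (D > 0 \<longleftrightarrow> p y > (\<Sum>k<V. (p k)\<^sup>2))"
proof
  have "V > 0"
    using assms(1) by simp
  from has_real_derivative_self_certainty_line[OF this, of z "grad_dir V z y"]
  have "(SCpath has_real_derivative p y - (\<Sum>k<V. (p k)\<^sup>2)) (at 0)"
    using assms(2) by (simp add: SCpath_def p_def sum_grad_dir sum_softmax_times_grad_dir)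
  then show "(SCpath has_real_derivative p y - (\<Sum>k<V. (p k)\<^sup>2)) (at 0 within {0..}) \<and>
             (p y - (\<Sum>k<V. (p k)\<^sup>2) > 0 \<longleftrightarrow> p y > (\<Sum>k<V. (p k)\<^sup>2))"
    by (simp add: has_field_derivative_at_within)
qed

end
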